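(* Let $\widehat{G}$ be a chordal signed separable bigraph. Suppose that a vertex set $S$ minimally separates components $\widehat{H_1}$ and $\widehat{H_2}$ of $\widehat G-S$. Then $\widehat{H_1}$ or $\widehat{H_2}$ contains an edge which is a signed simplicial edge of $\widehat{G}$.
   Context: A signed graph is a finite simple graph each of whose edges is assigned a sign, positive or negative. A signed bigraph is a signed graph whose underlying graph is bipartite. A bigraph is separable if it contains an induced $2K_2$. A signed graph is positive if all its edges are positive and non-trivial if it has at least one edge. In a bigraph with bipartition $(X,Y)$, a subgraph $H$ is a biclique if every vertex of $V(H)\cap X$ is adjacent to every vertex of $V(H)\cap Y$. For an edge $uv$, $N(uv)=(N(u)\cup N(v))\setminus\{u,v\}$; $uv$ is signed simplicial if $N(uv)$ induces a positive biclique. A signed bigraph $\widehat G$ is chordal if its edges can be ordered $e_1,\dots,e_m$ so that each $e_i$ is signed simplicial in $\widehat G-\{e_1,\dots,e_{i-1}\}$ (edges deleted, vertices kept). For a vertex set $S$ and two distinct non-trivial connected components $H,H'$ of $\widehat G-S$, $S$ minimally separates $H$ and $H'$ if every vertex of $S$ has a neighbour in $H$ and a neighbour in $H'$. *)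

theory Defs
  imports Main
begin

text \<open>A signed bigraph is given by a finite vertex set V with a fixed bipartition (X,Y),
an edge set E of 2-element sets {x,y} with x in X and y in Y, and a sign function
sigma on edges (True = positive, False = negative).\<close>

definition signed_bigraph :: "'a set \<Rightarrow> 'a set \<Rightarrow> 'a set \<Rightarrow> 'a set set \<Rightarrow> bool" where
  "signed_bigraph V X Y E \<longleftrightarrow> finite V \<and> X \<inter> Y = {} \<and> X \<union> Y = V \<and>
     (\<forall>e\<in>E. \<exists>x\<in>X. \<exists>y\<in>Y. e = {x, y})"

definition nbr :: "'a set set \<Rightarrow> 'a \<Rightarrow> 'a set" where
  "nbr E v = {w. {v, w} \<in> E}"

definition edge_nbhd :: "'a set set \<Rightarrow> 'a set \<Rightarrow> 'a set" where
  "edge_nbhd E e = (\<Union>v\<in>e. nbr E v) - e"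

definition positive_biclique :: "'a set \<Rightarrow> 'a set \<Rightarrow> 'a set set \<Rightarrow> ('a set \<Rightarrow> bool) \<Rightarrow> 'a set \<Rightarrow> bool" where
  "positive_biclique X Y E sigma W \<longleftrightarrow>
     (\<forall>x\<in>W \<inter> X. \<forall>y\<in>W \<inter> Y. {x, y} \<in> E) \<and> (\<forall>e\<in>E. e \<subseteq> W \<longrightarrow> sigma e)"

definition signed_simplicial :: "'a set \<Rightarrow> 'a set \<Rightarrow> 'a set set \<Rightarrow> ('a set \<Rightarrow> bool) \<Rightarrow> 'a set \<Rightarrow> bool" where
  "signed_simplicial X Y E sigma e \<longleftrightarrow> e \<in> E \<and> positive_biclique X Y E sigma (edge_nbhd E e)"

definition chordal_signed :: "'a set \<Rightarrow> 'a set \<Rightarrow> 'a set set \<Rightarrow> ('a set \<Rightarrow> bool) \<Rightarrow> bool" where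
  "chordal_signed X Y E sigma \<longleftrightarrow>
     (\<exists>es. distinct es \<and> set es = E \<and>
        (\<forall>i<length es. signed_simplicial X Y (E - set (take i es)) sigma (es ! i)))"

definition separable :: "'a set set \<Rightarrow> bool" where
  "separable E \<longleftrightarrow> (\<exists>a b c d. distinct [a, b, c, d] \<and> {a, b} \<in> E \<and> {c, d} \<in> E \<and>
      {a, c} \<notin> E \<and> {a, d} \<notin> E \<and> {b, c} \<notin> E \<and> {b, d} \<notin> E)"

definition component_minus :: "'a set \<Rightarrow> 'a set set \<Rightarrow> 'a set \<Rightarrow> 'a set \<Rightarrow> bool" where
  "component_minus V E S H \<longleftrightarrow>
     (\<exists>v\<in>V - S. H = {w. (\<lambda>a b. {a, b} \<in> E \<and> a \<notin> S \<and> b \<notin> S)\<^sup>*\<^sup>* v w})"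

definition nontrivial_on :: "'a set set \<Rightarrow> 'a set \<Rightarrow> bool" where
  "nontrivial_on E H \<longleftrightarrow> (\<exists>e\<in>E. e \<subseteq> H)"

definition minimally_separates :: "'a set set \<Rightarrow> 'a set \<Rightarrow> 'a set \<Rightarrow> 'a set \<Rightarrow> bool" where
  "minimally_separates E S H1 H2 \<longleftrightarrow>
     (\<forall>s\<in>S. (\<exists>h\<in>H1. {s, h} \<in> E) \<and> (\<exists>h\<in>H2. {s, h} \<in> E))"

end

theory Submission
  imports Defs
begin

text \<open>Let e be the first edge of the elimination ordering that meets H1 \<union> H2, and let E' be the
edge set at the moment it is eliminated; E' still contains every edge meeting H1 \<union> H2.
In a bigraph the neighbourhood of a simplicial edge uv is a biclique, so a neighbour of u and a
neighbour of v are adjacent. Applied to an edge xy inside S, with x adjacent to H1 and y to H2,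
this would create an edge between H1 and H2; hence no edge eliminated before e lies inside S.
Applied to e = uw with u in a component H and w in S, with a neighbour of u in H (H is
non-trivial) and a neighbour of w in the other component, it gives the same contradiction;
hence e lies inside H1 or H2. Finally N(e) \<subseteq> H \<union> S, and the edges inside N(e) that were
eliminated before e would lie inside S, so neither N(e) nor the edges it spans change when the
eliminated edges are restored: e is signed simplicial in the whole graph.\<close>

definition adj_minus :: "'a set set \<Rightarrow> 'a set \<Rightarrow> 'a \<Rightarrow> 'a \<Rightarrow> bool" where
  "adj_minus E S a b \<longleftrightarrow> {a, b} \<in> E \<and> a \<notin> S \<and> b \<notin> S"

lemma component_minus_adj_minus:
  "component_minus V E S H \<longleftrightarrow> (\<exists>v\<in>V - S. H = {w. (adj_minus E S)\<^sup>*\<^sup>* v w})"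
  unfolding component_minus_def adj_minus_def[abs_def] ..

lemma symp_adj_minus: "symp (adj_minus E S)"
  by (auto simp: symp_def adj_minus_def insert_commute)

lemma component_minus_eq_reachable:
  assumes "component_minus V E S H" and "a \<in> H"
  shows "H = {w. (adj_minus E S)\<^sup>*\<^sup>* a w}"
proof -
  from assms(1) obtain v where H: "H = {w. (adj_minus E S)\<^sup>*\<^sup>* v w}"
    unfolding component_minus_adj_minus by blast
  with assms(2) have va: "(adj_minus E S)\<^sup>*\<^sup>* v a"
    by blast
  then have av: "(adj_minus E S)\<^sup>*\<^sup>* a v"
    by (rule sympD[OF symp_rtranclp[OF symp_adj_minus]])
  from H show ?thesis
    using rtranclp_trans[OF va] rtranclp_trans[OF av] by blast
qed

lemma component_minus_disjoint_separator:
  assumes "component_minus V E S H"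
  shows "H \<inter> S = {}"
proof -
  from assms obtain v where "v \<notin> S" and H: "H = {w. (adj_minus E S)\<^sup>*\<^sup>* v w}"
    unfolding component_minus_adj_minus by blast
  have "w \<notin> S" if "(adj_minus E S)\<^sup>*\<^sup>* v w" for w
    using that \<open>v \<notin> S\<close> by induction (auto simp: adj_minus_def)
  with H show ?thesis
    by blast
qed

lemma component_minus_closed:
  assumes "component_minus V E S H" and "h \<in> H" and "{h, w} \<in> E" and "w \<notin> S"
  shows "w \<in> H"
proof -
  have "h \<notin> S"
    using assms(1,2) component_minus_disjoint_separator by blast
  with assms have "adj_minus E S h w"
    by (simp add: adj_minus_def)
  then show ?thesis
    using component_minus_eq_reachable[OF assms(1,2)] by auto
qed

lemma component_minus_disjoint:
  assumes "component_minus V E S H" and "component_minus V E S H'" and "H \<noteq> H'"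
  shows "H \<inter> H' = {}"
proof (rule ccontr)
  assume "H \<inter> H' \<noteq> {}"
  then obtain w where "w \<in> H" "w \<in> H'"
    by blast
  with assms(3) show False
    using component_minus_eq_reachable[OF assms(1) \<open>w \<in> H\<close>]
      component_minus_eq_reachable[OF assms(2) \<open>w \<in> H'\<close>] by argo
qed

lemma component_minus_no_edge_between:
  assumes "component_minus V E S H" and "component_minus V E S H'" and "H \<noteq> H'"
    and "a \<in> H" and "b \<in> H'"
  shows "{a, b} \<notin> E"
proof
  assume "{a, b} \<in> E"
  moreover have "b \<notin> S"
    using assms(2,5) component_minus_disjoint_separator by blast
  ultimately have "b \<in> H"
    by (rule component_minus_closed[OF assms(1,4)])
  with assms(5) component_minus_disjoint[OF assms(1-3)] show False
    by blast
qed

lemma component_minus_nontrivial_nbr: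
  assumes "component_minus V E S H" and "nontrivial_on E H" and "{} \<notin> E" and "h \<in> H"
  shows "\<exists>h'\<in>H. {h, h'} \<in> E"
proof -
  from assms(2) obtain e where e: "e \<in> E" "e \<subseteq> H"
    unfolding nontrivial_on_def by blast
  show ?thesis
  proof (cases "e \<subseteq> {h}")
    case True
    with e(1) assms(3) have "e = {h}"
      by (metis subset_singletonD)
    then have "{h, h} \<in> E"
      using e(1) by simp
    with assms(4) show ?thesis
      by blast
  next
    case False
    then obtain x where "x \<in> H" "x \<noteq> h"
      using e by blast
    have H_eq: "H = {w. (adj_minus E S)\<^sup>*\<^sup>* h w}"
      using component_minus_eq_reachable[OF assms(1,4)] .
    with \<open>x \<in> H\<close> have "(adj_minus E S)\<^sup>*\<^sup>* h x"
      by simp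
    with \<open>x \<noteq> h\<close> obtain z where "adj_minus E S h z"
      by (blast dest: rtranclpD tranclpD)
    then have "z \<in> H" and "{h, z} \<in> E"
      using H_eq by (simp_all add: r_into_rtranclp adj_minus_def)
    then show ?thesis
      by blast
  qed
qed

lemma edge_nbhd_subset_component:
  assumes "component_minus V E S H" and "e \<subseteq> H"
  shows "edge_nbhd E e \<subseteq> H \<union> S"
proof
  fix z
  assume "z \<in> edge_nbhd E e"
  then obtain v where "v \<in> e" and "{v, z} \<in> E"
    unfolding edge_nbhd_def nbr_def by blast
  with assms(2) show "z \<in> H \<union> S"
    using component_minus_closed[OF assms(1), of v z] by blast
qed

lemma signed_bigraph_mono:
  assumes "signed_bigraph V X Y E" and "E' \<subseteq> E"
  shows "signed_bigraph V X Y E'"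
  using assms unfolding signed_bigraph_def by (simp add: subset_iff)

lemma signed_bigraph_edgeE:
  assumes "signed_bigraph V X Y E" and "e \<in> E"
  obtains x y where "x \<in> X" and "y \<in> Y" and "e = {x, y}"
proof -
  from assms(1) have "\<forall>e\<in>E. \<exists>x\<in>X. \<exists>y\<in>Y. e = {x, y}"
    by (simp add: signed_bigraph_def)
  with assms(2) that show ?thesis
    by blast
qed

lemma signed_bigraph_edge_sides:
  assumes "signed_bigraph V X Y E" and "{a, b} \<in> E"
  shows "a \<in> X \<and> b \<in> Y \<or> a \<in> Y \<and> b \<in> X"
proof -
  from assms obtain x y where "x \<in> X" and "y \<in> Y" and "{a, b} = {x, y}"
    by (rule signed_bigraph_edgeE)
  then show ?thesis
    by (auto simp: doubleton_eq_iff)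
qed

lemma signed_bigraph_empty_not_edge:
  assumes "signed_bigraph V X Y E"
  shows "{} \<notin> E"
  using signed_bigraph_edgeE[OF assms] by blast

lemma signed_simplicial_nbrs_adjacent:
  assumes G: "signed_bigraph V X Y E" and simplicial: "signed_simplicial X Y E sigma {u, w}"
    and ua: "{u, a} \<in> E" and wb: "{w, b} \<in> E" and "a \<noteq> w" and "b \<noteq> u"
  shows "{a, b} \<in> E"
proof -
  let ?N = "edge_nbhd E {u, w}"
  have uw: "{u, w} \<in> E" and biclique: "\<forall>x\<in>?N \<inter> X. \<forall>y\<in>?N \<inter> Y. {x, y} \<in> E"
    using simplicial unfolding signed_simplicial_def positive_biclique_def by simp_all
  have "X \<inter> Y = {}"
    using G by (simp add: signed_bigraph_def)
  note sides = this signed_bigraph_edge_sides[OF G uw] signed_bigraph_edge_sides[OF G ua]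
    signed_bigraph_edge_sides[OF G wb]
  then have "a \<noteq> u" and "b \<noteq> w"
    by blast+
  with assms(5,6) ua wb have "a \<in> ?N" and "b \<in> ?N"
    unfolding edge_nbhd_def nbr_def by auto
  from sides have "a \<in> X \<and> b \<in> Y \<or> a \<in> Y \<and> b \<in> X"
    by blast
  then show ?thesis
  proof
    assume "a \<in> X \<and> b \<in> Y"
    with \<open>a \<in> ?N\<close> \<open>b \<in> ?N\<close> biclique show ?thesis
      by blast
  next
    assume "a \<in> Y \<and> b \<in> X"
    with \<open>a \<in> ?N\<close> \<open>b \<in> ?N\<close> biclique have "{b, a} \<in> E"
      by blast
    then show ?thesis
      by (simp add: insert_commute)
  qed
qed

lemma signed_simplicial_supergraph:
  assumes "E' \<subseteq> E" and "signed_simplicial X Y E' sigma e"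
    and incident: "\<And>f. f \<in> E \<Longrightarrow> f \<inter> e \<noteq> {} \<Longrightarrow> f \<in> E'"
    and spanned: "\<And>f. f \<in> E \<Longrightarrow> f \<subseteq> edge_nbhd E e \<Longrightarrow> f \<in> E'"
  shows "signed_simplicial X Y E sigma e"
proof -
  have "nbr E v = nbr E' v" if "v \<in> e" for v
    using that assms(1) incident unfolding nbr_def by blast
  then have nbhd: "edge_nbhd E e = edge_nbhd E' e"
    unfolding edge_nbhd_def by simp
  show ?thesis
    using assms(1,2) spanned unfolding signed_simplicial_def positive_biclique_def nbhd
    by blast
qed

lemma chordal_signed_first_edge_meeting:
  assumes "chordal_signed X Y E sigma" and "e0 \<in> E" and "e0 \<inter> U \<noteq> {}"
  obtains E' e where "E' \<subseteq> E" and "\<And>f. f \<in> E \<Longrightarrow> f \<inter> U \<noteq> {} \<Longrightarrow> f \<in> E'"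
    and "signed_simplicial X Y E' sigma e" and "e \<inter> U \<noteq> {}"
    and "\<And>f. f \<in> E - E' \<Longrightarrow>
      \<exists>E''. E' \<subseteq> E'' \<and> E'' \<subseteq> E \<and> signed_simplicial X Y E'' sigma f"
proof -
  from assms(1) obtain es where "set es = E"
    and simplicial: "\<forall>i<length es. signed_simplicial X Y (E - set (take i es)) sigma (es ! i)"
    unfolding chordal_signed_def by blast
  define meets where "meets j \<longleftrightarrow> j < length es \<and> es ! j \<inter> U \<noteq> {}" for j
  from assms(2) \<open>set es = E\<close> obtain j0 where "j0 < length es" and "es ! j0 = e0"
    by (auto simp: in_set_conv_nth)
  with assms(3) have "meets j0"
    by (simp add: meets_def)
  define i where "i = (LEAST j. meets j)"
  have i: "i < length es" "es ! i \<inter> U \<noteq> {}"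
    using LeastI[of meets, OF \<open>meets j0\<close>] unfolding i_def meets_def by auto
  have earlier: "\<exists>j<i. f = es ! j" if "f \<in> set (take i es)" for f
    using that i(1) by (auto simp: in_set_conv_nth)
  have disjoint_earlier: "es ! j \<inter> U = {}" if "j < i" for j
    using not_less_Least[of j meets] that i(1) unfolding i_def meets_def by auto
  show ?thesis
  proof
    show "E - set (take i es) \<subseteq> E"
      by blast
    show "f \<in> E - set (take i es)" if "f \<in> E" and "f \<inter> U \<noteq> {}" for f
      using that earlier disjoint_earlier by blast
    show "signed_simplicial X Y (E - set (take i es)) sigma (es ! i)"
      using simplicial i(1) by blast
    show "es ! i \<inter> U \<noteq> {}"
      using i(2) .
    fix f
    assume "f \<in> E - (E - set (take i es))"
    then obtain j where "j < i" and "f = es ! j"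
      using earlier by blast
    show "\<exists>E''. E - set (take i es) \<subseteq> E'' \<and> E'' \<subseteq> E \<and> signed_simplicial X Y E'' sigma f"
    proof (intro exI conjI)
      show "E - set (take i es) \<subseteq> E - set (take j es)"
        using \<open>j < i\<close> set_take_subset_set_take[of j i es] by auto
      show "E - set (take j es) \<subseteq> E"
        by blast
      show "signed_simplicial X Y (E - set (take j es)) sigma f"
        using simplicial \<open>j < i\<close> i(1) \<open>f = es ! j\<close> by simp
    qed
  qed
qed

lemma minimal_separator_spans_no_signed_simplicial_edge:
  assumes G: "signed_bigraph V X Y E"
    and H1: "component_minus V E S H1" and H2: "component_minus V E S H2" and "H1 \<noteq> H2"
    and sep: "minimally_separates E S H1 H2"
    and "E' \<subseteq> E" and kept: "\<And>g. g \<in> E \<Longrightarrow> g \<inter> (H1 \<union> H2) \<noteq> {} \<Longrightarrow> g \<in> E'"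
    and "f \<subseteq> S"
  shows "\<not> signed_simplicial X Y E' sigma f"
proof
  assume simplicial: "signed_simplicial X Y E' sigma f"
  then have "f \<in> E"
    using \<open>E' \<subseteq> E\<close> unfolding signed_simplicial_def by blast
  have G': "signed_bigraph V X Y E'"
    using signed_bigraph_mono[OF G \<open>E' \<subseteq> E\<close>] .
  from G \<open>f \<in> E\<close> obtain x y where f: "f = {x, y}"
    by (rule signed_bigraph_edgeE)
  with \<open>f \<subseteq> S\<close> have "x \<in> S" and "y \<in> S"
    by auto
  with sep obtain h1 h2 where h1: "h1 \<in> H1" "{x, h1} \<in> E" and h2: "h2 \<in> H2" "{y, h2} \<in> E"
    unfolding minimally_separates_def by blast
  have "{x, h1} \<in> E'" and "{y, h2} \<in> E'"
    using kept h1 h2 by blast+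
  moreover have "h1 \<noteq> y" and "h2 \<noteq> x"
    using h1(1) h2(1) \<open>x \<in> S\<close> \<open>y \<in> S\<close> component_minus_disjoint_separator[OF H1]
      component_minus_disjoint_separator[OF H2] by blast+
  ultimately have "{h1, h2} \<in> E'"
    by (rule signed_simplicial_nbrs_adjacent[OF G' simplicial[unfolded f]])
  with \<open>E' \<subseteq> E\<close> show False
    using component_minus_no_edge_between[OF H1 H2 \<open>H1 \<noteq> H2\<close> h1(1) h2(1)] by blast
qed

lemma signed_simplicial_edge_inside_component:
  assumes G: "signed_bigraph V X Y E"
    and H: "component_minus V E S H" and H': "component_minus V E S H'" and "H \<noteq> H'"
    and "nontrivial_on E H" and to_H': "\<forall>s\<in>S. \<exists>h\<in>H'. {s, h} \<in> E"
    and "E' \<subseteq> E" and kept: "\<And>g. g \<in> E \<Longrightarrow> g \<inter> (H \<union> H') \<noteq> {} \<Longrightarrow> g \<in> E'"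
    and simplicial: "signed_simplicial X Y E' sigma e" and "u \<in> e" and "u \<in> H"
  shows "e \<subseteq> H"
proof -
  have "e \<in> E"
    using simplicial \<open>E' \<subseteq> E\<close> unfolding signed_simplicial_def by blast
  with G obtain x y where "e = {x, y}"
    by (rule signed_bigraph_edgeE)
  with \<open>u \<in> e\<close> obtain w where e: "e = {u, w}"
    by blast
  have G': "signed_bigraph V X Y E'"
    using signed_bigraph_mono[OF G \<open>E' \<subseteq> E\<close>] .
  have "w \<in> H"
  proof (rule ccontr)
    assume "w \<notin> H"
    then have "w \<in> S"
      using component_minus_closed[OF H \<open>u \<in> H\<close>] \<open>e \<in> E\<close> e by blast
    obtain h where h: "h \<in> H" "{u, h} \<in> E"
      using component_minus_nontrivial_nbr[OF H \<open>nontrivial_on E H\<close>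
          signed_bigraph_empty_not_edge[OF G] \<open>u \<in> H\<close>] by blast
    obtain h' where h': "h' \<in> H'" "{w, h'} \<in> E"
      using to_H' \<open>w \<in> S\<close> by blast
    have "h \<noteq> w"
      using h(1) \<open>w \<in> S\<close> component_minus_disjoint_separator[OF H] by blast
    moreover have "h' \<noteq> u"
      using h'(1) \<open>u \<in> H\<close> component_minus_disjoint[OF H H' \<open>H \<noteq> H'\<close>] by blast
    moreover have "{u, h} \<in> E'" "{w, h'} \<in> E'"
      using kept h h' \<open>u \<in> H\<close> by blast+
    ultimately have "{h, h'} \<in> E'"
      using signed_simplicial_nbrs_adjacent[OF G' simplicial[unfolded e]] by simp
    with \<open>E' \<subseteq> E\<close> show False
      using component_minus_no_edge_between[OF H H' \<open>H \<noteq> H'\<close> h(1) h'(1)] by blast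
  qed
  with e \<open>u \<in> H\<close> show ?thesis
    by blast
qed

lemma signed_simplicial_edge_inside_separated_components:
  assumes G: "signed_bigraph V X Y E"
    and H1: "component_minus V E S H1" and H2: "component_minus V E S H2" and "H1 \<noteq> H2"
    and "nontrivial_on E H1" and "nontrivial_on E H2" and sep: "minimally_separates E S H1 H2"
    and "E' \<subseteq> E" and kept: "\<And>f. f \<in> E \<Longrightarrow> f \<inter> (H1 \<union> H2) \<noteq> {} \<Longrightarrow> f \<in> E'"
    and simplicial: "signed_simplicial X Y E' sigma e" and "e \<inter> (H1 \<union> H2) \<noteq> {}"
  shows "e \<subseteq> H1 \<or> e \<subseteq> H2"
proof -
  have to_H1: "\<forall>s\<in>S. \<exists>h\<in>H1. {s, h} \<in> E" and to_H2: "\<forall>s\<in>S. \<exists>h\<in>H2. {s, h} \<in> E"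
    using sep unfolding minimally_separates_def by blast+
  from \<open>e \<inter> (H1 \<union> H2) \<noteq> {}\<close> obtain u where "u \<in> e" and "u \<in> H1 \<or> u \<in> H2"
    by blast
  then show ?thesis
  proof (elim disjE)
    assume "u \<in> H1"
    with signed_simplicial_edge_inside_component[OF G H1 H2 \<open>H1 \<noteq> H2\<close> \<open>nontrivial_on E H1\<close>
        to_H2 \<open>E' \<subseteq> E\<close> kept simplicial \<open>u \<in> e\<close>]
    show ?thesis
      by blast
  next
    assume "u \<in> H2"
    have kept': "f \<in> E'" if "f \<in> E" and "f \<inter> (H2 \<union> H1) \<noteq> {}" for f
      using kept that by (simp add: Un_commute)
    with signed_simplicial_edge_inside_component[OF G H2 H1 \<open>H1 \<noteq> H2\<close>[symmetric]
        \<open>nontrivial_on E H2\<close> to_H1 \<open>E' \<subseteq> E\<close> kept' simplicial \<open>u \<in> e\<close> \<open>u \<in> H2\<close>]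
    show ?thesis
      by blast
  qed
qed

lemma signed_simplicial_after_restoring_edges:
  assumes G: "signed_bigraph V X Y E"
    and H1: "component_minus V E S H1" and H2: "component_minus V E S H2" and "H1 \<noteq> H2"
    and sep: "minimally_separates E S H1 H2"
    and "E' \<subseteq> E" and kept: "\<And>f. f \<in> E \<Longrightarrow> f \<inter> (H1 \<union> H2) \<noteq> {} \<Longrightarrow> f \<in> E'"
    and eliminated: "\<And>f. f \<in> E - E' \<Longrightarrow>
      \<exists>E''. E' \<subseteq> E'' \<and> E'' \<subseteq> E \<and> signed_simplicial X Y E'' sigma f"
    and simplicial: "signed_simplicial X Y E' sigma e" and "e \<subseteq> H1 \<or> e \<subseteq> H2"
  shows "signed_simplicial X Y E sigma e"
proof (rule signed_simplicial_supergraph[OF \<open>E' \<subseteq> E\<close> simplicial])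
  obtain H where "H = H1 \<or> H = H2" and "e \<subseteq> H"
    using \<open>e \<subseteq> H1 \<or> e \<subseteq> H2\<close> by blast
  then have "component_minus V E S H" and "H \<subseteq> H1 \<union> H2"
    using H1 H2 by blast+
  show "f \<in> E'" if "f \<in> E" and "f \<inter> e \<noteq> {}" for f
    using kept that \<open>e \<subseteq> H\<close> \<open>H \<subseteq> H1 \<union> H2\<close> by blast
  show "f \<in> E'" if "f \<in> E" and "f \<subseteq> edge_nbhd E e" for f
  proof (rule ccontr)
    assume "f \<notin> E'"
    with kept \<open>f \<in> E\<close> have "f \<inter> (H1 \<union> H2) = {}"
      by blast
    moreover have "f \<subseteq> H \<union> S"
      using that(2) edge_nbhd_subset_component[OF \<open>component_minus V E S H\<close> \<open>e \<subseteq> H\<close>] by blast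
    ultimately have "f \<subseteq> S"
      using \<open>H \<subseteq> H1 \<union> H2\<close> by blast
    from eliminated \<open>f \<in> E\<close> \<open>f \<notin> E'\<close> obtain E'' where "E' \<subseteq> E''" and "E'' \<subseteq> E"
      and "signed_simplicial X Y E'' sigma f"
      by blast
    moreover have "g \<in> E''" if "g \<in> E" and "g \<inter> (H1 \<union> H2) \<noteq> {}" for g
      using kept[OF that] \<open>E' \<subseteq> E''\<close> by blast
    ultimately show False
      using minimal_separator_spans_no_signed_simplicial_edge[OF G H1 H2 \<open>H1 \<noteq> H2\<close> sep _ _ \<open>f \<subseteq> S\<close>]
      by blast
  qed
qed

theorem lemma4p3:
  fixes V X Y :: "'a set" and E :: "'a set set" and sigma :: "'a set \<Rightarrow> bool"
    and S H1 H2 :: "'a set"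
  assumes "signed_bigraph V X Y E"
    and "chordal_signed X Y E sigma"
    and "separable E"
    and "S \<subseteq> V"
    and "component_minus V E S H1" and "component_minus V E S H2" and "H1 \<noteq> H2"
    and "nontrivial_on E H1" and "nontrivial_on E H2"
    and "minimally_separates E S H1 H2"
  shows "\<exists>e\<in>E. (e \<subseteq> H1 \<or> e \<subseteq> H2) \<and> signed_simplicial X Y E sigma e"
proof -
  note G = assms(1) and H1 = assms(5) and H2 = assms(6) and sep = assms(10)
  from assms(8) obtain e0 where "e0 \<in> E" and "e0 \<subseteq> H1"
    unfolding nontrivial_on_def by blast
  moreover have "e0 \<noteq> {}"
    using \<open>e0 \<in> E\<close> signed_bigraph_empty_not_edge[OF G] by blast
  ultimately have meets: "e0 \<inter> (H1 \<union> H2) \<noteq> {}"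
    by blast
  obtain E' e where "E' \<subseteq> E"
    and kept: "\<And>f. f \<in> E \<Longrightarrow> f \<inter> (H1 \<union> H2) \<noteq> {} \<Longrightarrow> f \<in> E'"
    and simplicial: "signed_simplicial X Y E' sigma e" and "e \<inter> (H1 \<union> H2) \<noteq> {}"
    and eliminated: "\<And>f. f \<in> E - E' \<Longrightarrow>
      \<exists>E''. E' \<subseteq> E'' \<and> E'' \<subseteq> E \<and> signed_simplicial X Y E'' sigma f"
    using chordal_signed_first_edge_meeting[OF assms(2) \<open>e0 \<in> E\<close> meets] by blast
  have inside: "e \<subseteq> H1 \<or> e \<subseteq> H2"
    by (rule signed_simplicial_edge_inside_separated_components[OF G H1 H2 \<open>H1 \<noteq> H2\<close>
          assms(8,9) sep \<open>E' \<subseteq> E\<close> kept simplicial \<open>e \<inter> (H1 \<union> H2) \<noteq> {}\<close>])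
  have "signed_simplicial X Y E sigma e"
    by (rule signed_simplicial_after_restoring_edges[OF G H1 H2 \<open>H1 \<noteq> H2\<close> sep \<open>E' \<subseteq> E\<close>
          kept eliminated simplicial inside])
  with inside show ?thesis
    unfolding signed_simplicial_def by blast
qed

end
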